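(* Let $n\ge1$, $1\le s\le n$, $A_1,\dots,A_s\subset\mathbb Z^n$ finite, $m_1+\dots+m_s=n$ nonnegative integers, and let $b:A_1\sqcup\cdots\sqcup A_s\to\mathbb R$ be a lifting in general position. Let $W\subset A_1\sqcup\cdots\sqcup A_s$ and suppose that $\Xi(W)$ contains a line. Then $V(\mathrm{conv}(A_1),m_1;\dots;\mathrm{conv}(A_s),m_s)=0$.
   Context: A lifting $b$, written $b(i,\mathbf a)$ for $\mathbf a\in A_i$, is in general position if for every subset $S$ of $\{[-\mathrm e_i,\mathbf a,b(i,\mathbf a)]:\mathbf a\in A_i\}\subset\mathbb R^s\times\mathbb R^n\times\mathbb R$ of cardinality at most $n+s+1$, either $S$ is linearly independent or $[0,\dots,0,1]$ is a linear combination of $S$. For $\boldsymbol\xi\in(\mathbb R^n)^*$, $\lambda_i(\boldsymbol\xi)=\max_{\mathbf a\in A_i}(\boldsymbol\xi(\mathbf a)-b(i,\mathbf a))$. For $W\subset A_1\sqcup\cdots\sqcup A_s$, $\Xi(W)=\{\boldsymbol\xi\in\mathbb R^n:\ \forall (i,\mathbf a),\ \mathbf a\boldsymbol\xi-\lambda_i(\boldsymbol\xi)-b(i,\mathbf a)\le0,\ \text{with equality iff }(i,\mathbf a)\in W\}$. $V(K_1,m_1;\dots;K_s,m_s)$ is the mixed volume of the $n$-tuple in which $K_i$ is repeated $m_i$ times, the mixed volume of $(\mathcal K_1,\dots,\mathcal K_n)$ being $\frac1{n!}\frac{\partial^n}{\partial t_1\cdots\partial t_n}\mathrm{Vol}(t_1\mathcal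 K_1+\cdots+t_n\mathcal K_n)$ at $t=0$. *)

theory Defs
  imports "HOL-Analysis.Analysis"
begin

definition mink_comb :: "nat \<Rightarrow> (nat \<Rightarrow> real) \<Rightarrow> (nat \<Rightarrow> 'a::real_vector set) \<Rightarrow> 'a set" where
  "mink_comb n t K = {(\<Sum>j<n. t j *\<^sub>R x j) | x. \<forall>j<n. x j \<in> K j}"

text \<open>Partial derivative in coordinate j, taken within the nonnegative reals
  (the volume polynomial is only defined for nonnegative parameters).\<close>
definition pderiv_nn :: "nat \<Rightarrow> ((nat \<Rightarrow> real) \<Rightarrow> real) \<Rightarrow> (nat \<Rightarrow> real) \<Rightarrow> real" where
  "pderiv_nn j f t = (THE D. ((\<lambda>x. f (t(j := x))) has_real_derivative D) (at (t j) within {0..}))"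

fun iter_pderiv :: "((nat \<Rightarrow> real) \<Rightarrow> real) \<Rightarrow> nat \<Rightarrow> (nat \<Rightarrow> real) \<Rightarrow> real" where
  "iter_pderiv f 0 = f"
| "iter_pderiv f (Suc k) = pderiv_nn k (iter_pderiv f k)"

definition mixed_volume :: "(nat \<Rightarrow> (real^'n) set) \<Rightarrow> real" where
  "mixed_volume K =
     iter_pderiv (\<lambda>t. measure lebesgue (mink_comb CARD('n) t K)) CARD('n) (\<lambda>_. 0) / fact CARD('n)"

definition lift_vec :: "('s::finite \<Rightarrow> real^'n \<Rightarrow> real) \<Rightarrow> 's \<Rightarrow> real^'n \<Rightarrow> (real^'s) \<times> (real^'n) \<times> real" where
  "lift_vec b i a = (- axis i 1, a, b i a)"

definition general_position ::
  "('s::finite \<Rightarrow> (real^'n) set) \<Rightarrow> ('s \<Rightarrow> real^'n \<Rightarrow> real) \<Rightarrow> bool" where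
  "general_position A b \<longleftrightarrow>
     (\<forall>S. S \<subseteq> {lift_vec b i a | i a. a \<in> A i} \<and> card S \<le> CARD('n) + CARD('s) + 1 \<longrightarrow>
          independent S \<or> ((0, 0, 1) :: (real^'s) \<times> (real^'n) \<times> real) \<in> span S)"

definition lam :: "('s \<Rightarrow> (real^'n) set) \<Rightarrow> ('s \<Rightarrow> real^'n \<Rightarrow> real) \<Rightarrow> 's \<Rightarrow> real^'n \<Rightarrow> real" where
  "lam A b i \<xi> = Max ((\<lambda>a. \<xi> \<bullet> a - b i a) ` A i)"

definition Xi :: "('s \<Rightarrow> (real^'n) set) \<Rightarrow> ('s \<Rightarrow> real^'n \<Rightarrow> real) \<Rightarrow> ('s \<times> (real^'n)) set \<Rightarrow> (real^'n) set" where
  "Xi A b W = {\<xi>. \<forall>i a. a \<in> A i \<longrightarrow>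
       a \<bullet> \<xi> - lam A b i \<xi> - b i a \<le> 0 \<and>
       (a \<bullet> \<xi> - lam A b i \<xi> - b i a = 0 \<longleftrightarrow> (i, a) \<in> W)}"

end

theory Submission
  imports Defs
begin

text \<open>If the line p + t v lies in \<Xi>(W), then every A_i lies in a hyperplane orthogonal to v:
  at p the maximum defining \<lambda>_i is attained at some w \<in> A_i, so (i, w) \<in> W, hence w stays
  maximal along the whole line, and a linear function of t bounded above must be constant.
  All Minkowski combinations of the conv(A_i) then lie in a hyperplane orthogonal to v,
  so the volume polynomial vanishes identically on the nonnegative orthant and so do all its
  derivatives.\<close>

lemma trivial_limit_at_within_nonneg:
  fixes x :: real
  assumes "x \<ge> 0"
  shows "at x within {0..} \<noteq> bot"
proof -
  have "at_right x \<le> at x within {0..}"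
    using assms by (intro at_le) auto
  then show ?thesis
    using trivial_limit_at_right_real[of x] by (auto simp: bot_unique)
qed

lemma pderiv_nn_eq_0:
  assumes "t k \<ge> 0" and "\<And>x. x \<ge> 0 \<Longrightarrow> g (t(k := x)) = 0"
  shows "pderiv_nn k g t = 0"
proof -
  have zero: "((\<lambda>x. g (t(k := x))) has_real_derivative 0) (at (t k) within {0..})"
    by (rule has_field_derivative_transform_within[where f = "\<lambda>_. 0" and d = 1])
       (use assms in auto)
  show ?thesis
    unfolding pderiv_nn_def
  proof (rule the_equality)
    fix D
    assume "((\<lambda>x. g (t(k := x))) has_real_derivative D) (at (t k) within {0..})"
    with zero show "D = 0"
      unfolding has_real_derivative_iff_has_vector_derivative
      using vector_derivative_unique_within[OF trivial_limit_at_within_nonneg[OF assms(1)]]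
      by blast
  qed (rule zero)
qed

lemma iter_pderiv_eq_0:
  assumes "\<And>t. (\<forall>j. t j \<ge> 0) \<Longrightarrow> f t = 0" and "\<forall>j. t j \<ge> 0"
  shows "iter_pderiv f k t = 0"
  using assms(2)
proof (induction k arbitrary: t)
  case 0
  then show ?case using assms(1) by simp
next
  case (Suc k)
  then show ?case
    by (auto intro: pderiv_nn_eq_0)
qed

lemma linear_bounded_above_imp_slope_0:
  fixes a d K :: real
  assumes "\<And>t. a + t * d \<le> K"
  shows "d = 0"
proof (rule ccontr)
  assume "d \<noteq> 0"
  moreover have "a + ((K - a + 1) / d) * d \<le> K"
    by (rule assms)
  ultimately show False by simp
qed

lemma mink_comb_subset_hyperplane:
  fixes K :: "nat \<Rightarrow> 'a::real_inner set"
  assumes "\<And>j. j < n \<Longrightarrow> K j \<subseteq> {x. v \<bullet> x = c j}"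
  shows "mink_comb n t K \<subseteq> {x. v \<bullet> x = (\<Sum>j<n. t j * c j)}"
proof
  fix y
  assume "y \<in> mink_comb n t K"
  then obtain x where y: "y = (\<Sum>j<n. t j *\<^sub>R x j)" and x: "\<forall>j<n. x j \<in> K j"
    unfolding mink_comb_def by blast
  have "v \<bullet> y = (\<Sum>j<n. t j * (v \<bullet> x j))"
    unfolding y by (simp only: inner_sum_right inner_scaleR_right)
  also have "\<dots> = (\<Sum>j<n. t j * c j)"
    using x assms by (intro sum.cong) auto
  finally show "y \<in> {x. v \<bullet> x = (\<Sum>j<n. t j * c j)}" by simp
qed

lemma mixed_volume_eq_0_if_parallel_hyperplanes:
  fixes K :: "nat \<Rightarrow> (real^'n) set"
  assumes "v \<noteq> 0" and "\<And>j. j < CARD('n) \<Longrightarrow> K j \<subseteq> {x. v \<bullet> x = c j}"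
  shows "mixed_volume K = 0"
proof -
  have "measure lebesgue (mink_comb CARD('n) t K) = 0" for t
  proof -
    have "negligible {x. v \<bullet> x = (\<Sum>j<CARD('n). t j * c j)}"
      using negligible_hyperplane assms(1) by blast
    then have "negligible (mink_comb CARD('n) t K)"
      by (rule negligible_subset) (rule mink_comb_subset_hyperplane[OF assms(2)])
    then show ?thesis by (rule negligible_imp_measure0)
  qed
  then show ?thesis
    unfolding mixed_volume_def by (subst iter_pderiv_eq_0) auto
qed

lemma lam_attained:
  assumes "finite (A i)" and "A i \<noteq> {}"
  obtains w where "w \<in> A i" and "lam A b i \<xi> = \<xi> \<bullet> w - b i w"
proof -
  have "lam A b i \<xi> \<in> (\<lambda>a. \<xi> \<bullet> a - b i a) ` A i"
    unfolding lam_def using assms by (intro Max_in) auto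
  then show ?thesis using that by blast
qed

lemma line_in_Xi_imp_hyperplane:
  assumes "finite (A i)" and line: "\<And>t::real. p + t *\<^sub>R v \<in> Xi A b W"
  shows "\<exists>c. A i \<subseteq> {x. v \<bullet> x = c}"
proof (cases "A i = {}")
  case True
  then show ?thesis by auto
next
  case False
  then obtain w where w: "w \<in> A i" "lam A b i p = p \<bullet> w - b i w"
    using lam_attained[of A i, OF assms(1)] by metis
  have "p + 0 *\<^sub>R v \<in> Xi A b W"
    by (rule line)
  then have "w \<bullet> p - lam A b i p - b i w = 0 \<longleftrightarrow> (i, w) \<in> W"
    using w(1) unfolding Xi_def by auto
  then have active: "(i, w) \<in> W"
    using w(2) by (simp add: inner_commute)
  have "v \<bullet> a = v \<bullet> w" if a: "a \<in> A i" for a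
  proof -
    have "(a - w) \<bullet> p + t * ((a - w) \<bullet> v) \<le> b i a - b i w" for t
    proof -
      let ?\<xi> = "p + t *\<^sub>R v"
      have "w \<bullet> ?\<xi> - lam A b i ?\<xi> - b i w = 0" and "a \<bullet> ?\<xi> - lam A b i ?\<xi> - b i a \<le> 0"
        using line[of t] active w(1) a unfolding Xi_def by blast+
      moreover have "(a - w) \<bullet> ?\<xi> = (a - w) \<bullet> p + t * ((a - w) \<bullet> v)"
        by (simp only: inner_add_right inner_scaleR_right)
      moreover have "(a - w) \<bullet> ?\<xi> = a \<bullet> ?\<xi> - w \<bullet> ?\<xi>"
        by (rule inner_diff_left)
      ultimately show ?thesis by linarith
    qed
    then have "(a - w) \<bullet> v = 0"
      by (rule linear_bounded_above_imp_slope_0)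
    then show ?thesis
      by (metis inner_diff_right inner_commute eq_iff_diff_eq_0)
  qed
  then show ?thesis by blast
qed

theorem lemma7p2:
  fixes A :: "'s::finite \<Rightarrow> (real^'n) set"
    and m :: "'s \<Rightarrow> nat"
    and b :: "'s \<Rightarrow> real^'n \<Rightarrow> real"
    and W :: "('s \<times> (real^'n)) set"
    and \<sigma> :: "nat \<Rightarrow> 's"
  assumes s_le_n: "CARD('s) \<le> CARD('n)"
    and fin: "\<And>i. finite (A i)"
    and integral: "\<And>i a k. a \<in> A i \<Longrightarrow> a $ k \<in> \<int>"
    and m_sum: "(\<Sum>i\<in>UNIV. m i) = CARD('n)"
    and gp: "general_position A b"
    and W_sub: "W \<subseteq> Sigma UNIV A"
    and line: "\<exists>p v. v \<noteq> 0 \<and> (\<forall>t::real. p + t *\<^sub>R v \<in> Xi A b W)"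
    and \<sigma>_mult: "\<And>i. card {j. j < CARD('n) \<and> \<sigma> j = i} = m i"
  shows "mixed_volume (\<lambda>j. convex hull (A (\<sigma> j))) = 0"
proof -
  obtain p v where v: "v \<noteq> 0" and "\<And>t::real. p + t *\<^sub>R v \<in> Xi A b W"
    using line by blast
  then obtain c where "\<And>i. A i \<subseteq> {x. v \<bullet> x = c i}"
    using line_in_Xi_imp_hyperplane[of A, OF fin] by metis
  then have "\<And>i. convex hull (A i) \<subseteq> {x. v \<bullet> x = c i}"
    by (intro hull_minimal convex_hyperplane)
  with v show ?thesis
    by (intro mixed_volume_eq_0_if_parallel_hyperplanes) blast
qed

end
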